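(* If $n>2$ is even, then there exists more than one $\{1,\dots,n-1\}$-canonical element of $\mathrm{SU}(n)$.
   Context: For $\mathrm{SU}(n)$: $E_i$ is the $n\times n$ diagonal matrix with $(i,i)$ entry $\sqrt{-1}$, others $0$; $\mathfrak t=\{\sum a_iE_i:a_i\in\mathbb R,\sum a_i=0\}$; $H_i=\frac{n-i}{n}(E_1+\dots+E_i)-\frac{i}{n}(E_{i+1}+\dots+E_n)$, $i=1,\dots,n-1$. $\mathfrak I(\mathrm{SU}(n))=\{\sum a_iE_i\in\mathfrak t: a_i\in\mathbb Z\}$. $\mathfrak I'(\mathrm{SU}(n))$ is the set of elements of $\mathfrak I(\mathrm{SU}(n))$ of the form $\sum n_iH_i$ with all $n_i\ge0$. Partial order: $\sum n_iH_i\preceq\sum n_i'H_i$ iff $n_i'\le n_i$ for all $i$. For $I\subseteq\{1,\dots,n-1\}$, $\mathfrak C_I=\{\sum n_iH_i:n_i\ge0,\ n_j>0\iff j\in I\}$; an $I$-canonical element is a maximal element of $(\mathfrak I'(\mathrm{SU}(n))\cap\mathfrak C_I,\preceq)$. *)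

theory Defs
  imports Complex_Main
begin

text \<open>Elements of the Cartan subalgebra t of SU(n) are represented by their
real coordinates with respect to E_1,...,E_n: a function a :: nat => real with
a k = 0 for k outside {1..n}; the element is sum_k a k E_k.\<close>

definition su_t :: "nat \<Rightarrow> (nat \<Rightarrow> real) set" where
  "su_t n = {a. (\<forall>k. k \<notin> {1..n} \<longrightarrow> a k = 0) \<and> (\<Sum>k=1..n. a k) = 0}"

definition su_H :: "nat \<Rightarrow> nat \<Rightarrow> (nat \<Rightarrow> real)" where
  "su_H n i = (\<lambda>k. if 1 \<le> k \<and> k \<le> i then (real n - real i) / real n
                  else if i < k \<and> k \<le> n then - real i / real n else 0)"

definition su_comb :: "nat \<Rightarrow> (nat \<Rightarrow> real) \<Rightarrow> (nat \<Rightarrow> real)" where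
  "su_comb n c = (\<lambda>k. \<Sum>i=1..n-1. c i * su_H n i k)"

definition su_lattice :: "nat \<Rightarrow> (nat \<Rightarrow> real) set" where
  "su_lattice n = {a \<in> su_t n. \<forall>k. a k \<in> \<int>}"

definition su_lattice' :: "nat \<Rightarrow> (nat \<Rightarrow> real) set" where
  "su_lattice' n = {a \<in> su_lattice n.
      \<exists>c. (\<forall>i\<in>{1..n-1}. c i \<ge> 0) \<and> a = su_comb n c}"

definition su_preceq :: "nat \<Rightarrow> (nat \<Rightarrow> real) \<Rightarrow> (nat \<Rightarrow> real) \<Rightarrow> bool" where
  "su_preceq n x y \<longleftrightarrow> (\<exists>c c'. x = su_comb n c \<and> y = su_comb n c' \<and>
      (\<forall>i\<in>{1..n-1}. c' i \<le> c i))"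

definition su_cone :: "nat \<Rightarrow> nat set \<Rightarrow> (nat \<Rightarrow> real) set" where
  "su_cone n I = {x. \<exists>c. (\<forall>i\<in>{1..n-1}. c i \<ge> 0 \<and> (c i > 0 \<longleftrightarrow> i \<in> I)) \<and> x = su_comb n c}"

definition su_canonical :: "nat \<Rightarrow> nat set \<Rightarrow> (nat \<Rightarrow> real) \<Rightarrow> bool" where
  "su_canonical n I x \<longleftrightarrow> x \<in> su_lattice' n \<inter> su_cone n I \<and>
     (\<forall>y \<in> su_lattice' n \<inter> su_cone n I. su_preceq n x y \<longrightarrow> y = x)"

end

theory Submission
  imports Defs
begin

text \<open>Writing x = sum c_i H_i, the coefficients are the consecutive differences
c_k = x_k - x_(k+1), and the last coordinate is x_n = -(sum i c_i)/n. Hence x is a lattice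
point of the open cone over {1..n-1} iff all c_i are integers \<ge> 1 and n divides
sum i c_i, and the canonical elements are the coordinatewise minimal such c.
For n = 2m the sum of 1, ..., n-1 is m(2m-1), which is -m modulo 2m; so raising the
coefficient of H_m by 1 and raising the coefficient of H_1 by m both restore divisibility,
and in each case no smaller raise of the same coefficient does.\<close>

lemma su_H_diff_Suc:
  assumes "1 \<le> i" "i \<le> n - 1" "1 \<le> k" "k \<le> n - 1"
  shows "su_H n i k - su_H n i (Suc k) = (if i = k then 1 else 0)"
  using assms unfolding su_H_def by (auto simp: field_simps)

lemma su_comb_diff_Suc:
  assumes "1 \<le> k" "k \<le> n - 1"
  shows "su_comb n c k - su_comb n c (Suc k) = c k"
proof -
  have "su_comb n c k - su_comb n c (Suc k) = (\<Sum>i=1..n-1. c i * (su_H n i k - su_H n i (Suc k)))"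
    unfolding su_comb_def by (simp add: sum_subtractf right_diff_distrib)
  also have "\<dots> = (\<Sum>i=1..n-1. if i = k then c i else 0)"
    by (rule sum.cong) (use assms su_H_diff_Suc in auto)
  also have "\<dots> = c k"
    using assms by simp
  finally show ?thesis .
qed

lemma su_comb_coeff_eq:
  assumes "su_comb n c = su_comb n d" "i \<in> {1..n-1}"
  shows "c i = d i"
  using su_comb_diff_Suc[of i n c] su_comb_diff_Suc[of i n d] assms by auto

lemma su_comb_cong: "\<forall>i\<in>{1..n-1}. c i = d i \<Longrightarrow> su_comb n c = su_comb n d"
  unfolding su_comb_def by (intro ext sum.cong) auto

lemma su_comb_last: "su_comb n c n = - (\<Sum>i=1..n-1. c i * real i) / real n"
proof -
  have "su_comb n c n = (\<Sum>i=1..n-1. c i * (- real i / real n))"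
    unfolding su_comb_def by (rule sum.cong) (auto simp: su_H_def)
  then show ?thesis
    by (simp add: sum_divide_distrib sum_negf)
qed

lemma su_comb_outside:
  assumes "k \<notin> {1..n}"
  shows "su_comb n c k = 0"
proof -
  have "k = 0 \<or> k > n"
    using assms by auto
  then show ?thesis
    unfolding su_comb_def su_H_def by (intro sum.neutral) auto
qed

lemma sum_su_H:
  assumes "1 \<le> i" "i \<le> n - 1"
  shows "(\<Sum>k=1..n. su_H n i k) = 0"
proof -
  have split: "{1..n} = {1..i} \<union> {i<..n}" "{1..i} \<inter> {i<..n} = {}"
    using assms by auto
  have "(\<Sum>k=1..n. su_H n i k) = sum (su_H n i) {1..i} + sum (su_H n i) {i<..n}"
    unfolding split(1) by (rule sum.union_disjoint) (use split(2) in auto)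
  also have "\<dots> = (\<Sum>k\<in>{1..i}. (real n - real i) / real n) + (\<Sum>k\<in>{i<..n}. - real i / real n)"
    by (intro arg_cong2[where f = "(+)"] sum.cong) (auto simp: su_H_def)
  also have "\<dots> = real i * (real n - real i) / real n + (real n - real i) * (- real i / real n)"
    using assms by (simp add: of_nat_diff)
  also have "\<dots> = 0"
    by (simp add: field_simps)
  finally show ?thesis .
qed

lemma sum_su_comb: "(\<Sum>k=1..n. su_comb n c k) = 0"
proof -
  have "(\<Sum>k=1..n. su_comb n c k) = (\<Sum>i=1..n-1. c i * (\<Sum>k=1..n. su_H n i k))"
    unfolding su_comb_def by (subst sum.swap) (simp add: sum_distrib_left)
  also have "\<dots> = 0"
  proof (intro sum.neutral ballI)
    fix i assume "i \<in> {1..n-1}"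
    then show "c i * (\<Sum>k=1..n. su_H n i k) = 0"
      using sum_su_H[of i n] by simp
  qed
  finally show ?thesis .
qed

lemma su_comb_eq_last_plus_tail:
  assumes "1 \<le> k" "k \<le> n"
  shows "su_comb n c k = su_comb n c n + (\<Sum>i\<in>{k..<n}. c i)"
  using assms
proof (induction "n - k" arbitrary: k)
  case 0
  then show ?case by simp
next
  case (Suc d)
  then have "k < n" by simp
  have "su_comb n c (Suc k) = su_comb n c n + (\<Sum>i\<in>{Suc k..<n}. c i)"
    using Suc by simp
  moreover have "su_comb n c k - su_comb n c (Suc k) = c k"
    using Suc \<open>k < n\<close> by (intro su_comb_diff_Suc) auto
  moreover have "(\<Sum>i\<in>{k..<n}. c i) = c k + (\<Sum>i\<in>{Suc k..<n}. c i)"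
    using \<open>k < n\<close> by (simp add: sum.atLeast_Suc_lessThan)
  ultimately show ?case by linarith
qed

lemma su_comb_in_lattice:
  assumes "\<forall>i\<in>{1..n-1}. c i \<in> \<int>" "su_comb n c n \<in> \<int>"
  shows "su_comb n c \<in> su_lattice n"
proof -
  have "su_comb n c k \<in> \<int>" for k
  proof (cases "k \<in> {1..n}")
    case True
    have "(\<Sum>i\<in>{k..<n}. c i) \<in> \<int>"
      by (rule Ints_sum) (use assms True in auto)
    then show ?thesis
      using su_comb_eq_last_plus_tail[of k n c] True assms by auto
  qed (simp add: su_comb_outside)
  then show ?thesis
    using su_comb_outside sum_su_comb unfolding su_lattice_def su_t_def by auto
qed

lemma su_canonical_if_minimal:
  assumes e: "\<forall>i\<in>{1..n-1}. e i \<in> \<int> \<and> e i \<ge> 1" and e_last: "su_comb n e n \<in> \<int>"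
    and minimal: "\<And>c. \<forall>i\<in>{1..n-1}. c i \<in> \<int> \<and> 1 \<le> c i \<and> c i \<le> e i
        \<Longrightarrow> su_comb n c n \<in> \<int> \<Longrightarrow> \<forall>i\<in>{1..n-1}. c i = e i"
  shows "su_canonical n {1..n-1} (su_comb n e)"
proof -
  have "su_comb n e \<in> su_lattice n"
    using su_comb_in_lattice e e_last by auto
  moreover have "\<forall>i\<in>{1..n-1}. 0 \<le> e i"
    using e by force
  ultimately have e_lattice: "su_comb n e \<in> su_lattice' n"
    unfolding su_lattice'_def by blast
  have "\<forall>i\<in>{1..n-1}. 0 \<le> e i \<and> (0 < e i \<longleftrightarrow> i \<in> {1..n-1})"
    using e by force
  then have e_cone: "su_comb n e \<in> su_cone n {1..n-1}"
    unfolding su_cone_def by blast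
  have "y = su_comb n e"
    if "y \<in> su_lattice' n" "y \<in> su_cone n {1..n-1}" "su_preceq n (su_comb n e) y" for y
  proof -
    from \<open>y \<in> su_cone n {1..n-1}\<close> obtain c where c_pos: "\<forall>i\<in>{1..n-1}. c i > 0"
      and y: "y = su_comb n c" unfolding su_cone_def by auto
    have y_int: "\<forall>k. y k \<in> \<int>"
      using \<open>y \<in> su_lattice' n\<close> unfolding su_lattice'_def su_lattice_def by blast
    from \<open>su_preceq n (su_comb n e) y\<close> obtain d d' where
      "su_comb n e = su_comb n d" "y = su_comb n d'" "\<forall>i\<in>{1..n-1}. d' i \<le> d i"
      unfolding su_preceq_def by blast
    then have c_le_e: "c i \<le> e i" if "i \<in> {1..n-1}" for i
      using su_comb_coeff_eq[of n e d i] su_comb_coeff_eq[of n c d' i] y that by auto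
    have c_int: "c i \<in> \<int>" if "i \<in> {1..n-1}" for i
      using su_comb_diff_Suc[of i n c] y y_int that by (metis Ints_diff atLeastAtMost_iff)
    have "c i \<ge> 1" if "i \<in> {1..n-1}" for i
    proof -
      have "c i > 0"
        using c_pos that by blast
      then show ?thesis
        using Ints_nonzero_abs_ge1[OF c_int[OF that]] by simp
    qed
    moreover have "su_comb n c n \<in> \<int>"
      using y_int y by simp
    ultimately have "\<forall>i\<in>{1..n-1}. c i = e i"
      using minimal c_int c_le_e by blast
    then show ?thesis
      using y su_comb_cong by blast
  qed
  then show ?thesis
    unfolding su_canonical_def using e_lattice e_cone by blast
qed

definition bump_coeffs :: "nat \<Rightarrow> nat \<Rightarrow> nat \<Rightarrow> real" where
  "bump_coeffs p t i = (if i = p then 1 + real t else 1)"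

lemma real_div_in_Ints_iff_dvd:
  assumes "n > 0"
  shows "real N / real n \<in> \<int> \<longleftrightarrow> n dvd N"
proof
  assume "real N / real n \<in> \<int>"
  then obtain z where "real N / real n = of_int z"
    by (elim Ints_cases)
  then have "real_of_int (int N) = real_of_int (int n * z)"
    using assms by (simp add: field_simps)
  then have "int n dvd int N"
    by (simp only: of_int_eq_iff) simp
  then show "n dvd N"
    by simp
next
  assume "n dvd N"
  then show "real N / real n \<in> \<int>"
    using assms by (auto elim: dvdE)
qed

lemma su_comb_bump_last_in_Ints_iff:
  assumes "p \<in> {1..n-1}"
  shows "su_comb n (bump_coeffs p t) n \<in> \<int> \<longleftrightarrow> n dvd (\<Sum>{1..n-1} + t * p)"
proof -
  have "n > 0"
    using assms by auto
  have "(\<Sum>i=1..n-1. bump_coeffs p t i * real i)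
        = (\<Sum>i=1..n-1. real i + (if i = p then real t * real p else 0))"
    by (rule sum.cong) (auto simp: bump_coeffs_def algebra_simps)
  also have "\<dots> = real (\<Sum>{1..n-1} + t * p)"
    using assms by (simp add: sum.distrib)
  finally have last: "su_comb n (bump_coeffs p t) n = - (real (\<Sum>{1..n-1} + t * p) / real n)"
    by (simp add: su_comb_last minus_divide_left)
  from \<open>n > 0\<close> show ?thesis
    by (simp only: last minus_in_Ints_iff real_div_in_Ints_iff_dvd)
qed

lemma su_canonical_bump:
  assumes p: "p \<in> {1..n-1}"
    and dvd_iff: "\<And>s. s \<le> t \<Longrightarrow> n dvd (\<Sum>{1..n-1} + s * p) \<longleftrightarrow> s = t"
  shows "su_canonical n {1..n-1} (su_comb n (bump_coeffs p t))"
proof (rule su_canonical_if_minimal)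
  show "\<forall>i\<in>{1..n-1}. bump_coeffs p t i \<in> \<int> \<and> bump_coeffs p t i \<ge> 1"
    unfolding bump_coeffs_def by auto
  show "su_comb n (bump_coeffs p t) n \<in> \<int>"
    using su_comb_bump_last_in_Ints_iff[OF p] dvd_iff by simp
next
  fix c assume c: "\<forall>i\<in>{1..n-1}. c i \<in> \<int> \<and> 1 \<le> c i \<and> c i \<le> bump_coeffs p t i"
    and c_last: "su_comb n c n \<in> \<int>"
  have "c p - 1 \<in> \<nat>"
    using c p by (auto simp: Nats_altdef2)
  then obtain s where s: "c p = 1 + real s"
    by (metis Nats_cases add.commute diff_add_cancel)
  have "c p \<le> bump_coeffs p t p"
    using c p by blast
  with s have "s \<le> t"
    by (simp add: bump_coeffs_def)
  have "\<forall>i\<in>{1..n-1}. c i = bump_coeffs p s i"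
    using c s by (force simp: bump_coeffs_def)
  then have "su_comb n c = su_comb n (bump_coeffs p s)"
    by (rule su_comb_cong)
  then have "s = t"
    using c_last su_comb_bump_last_in_Ints_iff[OF p] dvd_iff[OF \<open>s \<le> t\<close>] by auto
  then show "\<forall>i\<in>{1..n-1}. c i = bump_coeffs p t i"
    using \<open>\<forall>i\<in>{1..n-1}. c i = bump_coeffs p s i\<close> by simp
qed

lemma sum_below_even:
  fixes m :: nat
  assumes "n = 2 * m" "m \<ge> 1"
  shows "\<Sum>{1..n-1} = 2 * m * (m - 1) + m"
proof -
  have "\<Sum>{1..n-1} = m * (2 * m - 1)"
    using gauss_sum_from_Suc_0[of "2 * m - 1", where 'a = nat] assms by simp
  also have "\<dots> = 2 * m * (m - 1) + m"
    using assms by (cases m) (auto simp: algebra_simps)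
  finally show ?thesis .
qed

lemma even_dvd_sum_below_plus_middle:
  fixes m s :: nat
  assumes "n = 2 * m" "m \<ge> 1" "s \<le> 1"
  shows "n dvd \<Sum>{1..n-1} + s * m \<longleftrightarrow> s = 1"
proof -
  have "\<Sum>{1..n-1} + s * m = 2 * m * (m - 1) + m * (s + 1)"
    using sum_below_even[OF assms(1,2)] by (simp add: algebra_simps)
  then show ?thesis
    using assms by (cases s) (auto simp: dvd_add_right_iff)
qed

lemma even_dvd_sum_below_plus_first:
  fixes m s :: nat
  assumes "n = 2 * m" "m \<ge> 1" "s \<le> m"
  shows "n dvd \<Sum>{1..n-1} + s * 1 \<longleftrightarrow> s = m"
proof -
  have "2 * m dvd m + s \<longleftrightarrow> s = m"
  proof
    assume "2 * m dvd m + s"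
    then obtain q where q: "m + s = 2 * m * q" ..
    moreover have "0 < m + s" "m + s \<le> 2 * m"
      using assms by auto
    ultimately have "q = 1"
      by (cases q) auto
    then show "s = m"
      using q by simp
  qed (simp add: mult_2)
  then show ?thesis
    using sum_below_even[OF assms(1,2)] assms(1) by (simp add: add.assoc dvd_add_right_iff)
qed

theorem mainTheorem12:
  fixes n :: nat
  assumes "n > 2" and "even n"
  shows "\<exists>x y. su_canonical n {1..n-1} x \<and> su_canonical n {1..n-1} y \<and> x \<noteq> y"
proof -
  obtain m where n: "n = 2 * m" and "m \<ge> 2"
    using assms by (auto elim: evenE)
  have "m \<in> {1..n-1}" "1 \<in> {1..n-1}"
    using n \<open>m \<ge> 2\<close> by auto
  have middle: "su_canonical n {1..n-1} (su_comb n (bump_coeffs m 1))"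
    by (rule su_canonical_bump)
      (use \<open>m \<in> {1..n-1}\<close> even_dvd_sum_below_plus_middle[OF n] \<open>m \<ge> 2\<close> in auto)
  have first: "su_canonical n {1..n-1} (su_comb n (bump_coeffs 1 m))"
    by (rule su_canonical_bump)
      (use \<open>1 \<in> {1..n-1}\<close> even_dvd_sum_below_plus_first[OF n] \<open>m \<ge> 2\<close> in auto)
  have "bump_coeffs m 1 1 \<noteq> bump_coeffs 1 m 1"
    using \<open>m \<ge> 2\<close> by (simp add: bump_coeffs_def)
  then have "su_comb n (bump_coeffs m 1) \<noteq> su_comb n (bump_coeffs 1 m)"
    using su_comb_coeff_eq \<open>1 \<in> {1..n-1}\<close> by blast
  then show ?thesis
    using middle first by blast
qed

end
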